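(* Let $(g(x))_{x\ge0}$ be a semigroup acting on a real finite-dimensional vector space $V$, let $V=\bigoplus_{i=1}^nV_i$ be an SRPD, and suppose that for some component $V_i$ and some $x_0>0$ the map $g(x_0)|_{V_i}$ has eigenvalue $0$. Then $g(x)|_{V_i}$ has $0$ as its only eigenvalue for every $x>0$, and $V_i\subseteq\ker g(x)$ for all $x>0$.
   Context: A semigroup is a map $g:[0,\infty)\to L(V)$ with $g(0)=\mathrm{id}$ and $g(x+y)=g(x)g(y)$ for all $x,y\ge0$. A simultaneous real primary decomposition (SRPD) is a decomposition $V=\bigoplus_{i=1}^nV_i$ into nonzero subspaces, each $g(x)$-invariant for all $x\ge0$, such that each $V_i$ is either of first type: for every $x\ge0$, $g(x)|_{V_i}$ has exactly one (complex) eigenvalue $\lambda(x)$, which is real and $\ge0$; or of second type: for every $x\ge 0$ the eigenvalues of $g(x)|_{V_i}$ lie in $\{\lambda(x),\overline{\lambda(x)}\}$ for some $\lambda(x)\in\mathbb C$, with $\lambda(x)\notin\mathbb R$ for some $x$. *)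

theory Defs
  imports "HOL-Analysis.Analysis"
begin

definition semigroup :: "(real \<Rightarrow> 'a::euclidean_space \<Rightarrow> 'a) \<Rightarrow> bool" where
  "semigroup g \<longleftrightarrow> (\<forall>x\<ge>0. linear (g x)) \<and> g 0 = id \<and>
     (\<forall>x y. x \<ge> 0 \<longrightarrow> y \<ge> 0 \<longrightarrow> g (x + y) = g x \<circ> g y)"

text \<open>lam is a (complex) eigenvalue of the restriction of the real linear map T to the
invariant subspace W, i.e. an eigenvalue of the complexification of T restricted to W:
there is a nonzero u + i v (u, v in W) with T(u + i v) = lam (u + i v).\<close>
definition restr_eigenvalue :: "('a::euclidean_space \<Rightarrow> 'a) \<Rightarrow> 'a set \<Rightarrow> complex \<Rightarrow> bool" where
  "restr_eigenvalue T W lam \<longleftrightarrow>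
     (\<exists>u v. u \<in> W \<and> v \<in> W \<and> (u \<noteq> 0 \<or> v \<noteq> 0) \<and>
        T u = Re lam *\<^sub>R u - Im lam *\<^sub>R v \<and>
        T v = Im lam *\<^sub>R u + Re lam *\<^sub>R v)"

definition restr_spectrum :: "('a::euclidean_space \<Rightarrow> 'a) \<Rightarrow> 'a set \<Rightarrow> complex set" where
  "restr_spectrum T W = {lam. restr_eigenvalue T W lam}"

definition direct_sum :: "nat \<Rightarrow> (nat \<Rightarrow> 'a::euclidean_space set) \<Rightarrow> bool" where
  "direct_sum n Vs \<longleftrightarrow> (\<forall>i\<in>{1..n}. subspace (Vs i)) \<and>
     (\<forall>v. \<exists>!w. (\<forall>i. (i \<in> {1..n} \<longrightarrow> w i \<in> Vs i) \<and> (i \<notin> {1..n} \<longrightarrow> w i = 0))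
               \<and> v = (\<Sum>i\<in>{1..n}. w i))"

definition first_type :: "(real \<Rightarrow> 'a::euclidean_space \<Rightarrow> 'a) \<Rightarrow> 'a set \<Rightarrow> bool" where
  "first_type g W \<longleftrightarrow>
     (\<forall>x\<ge>0. \<exists>r::real. r \<ge> 0 \<and> restr_spectrum (g x) W = {complex_of_real r})"

definition second_type :: "(real \<Rightarrow> 'a::euclidean_space \<Rightarrow> 'a) \<Rightarrow> 'a set \<Rightarrow> bool" where
  "second_type g W \<longleftrightarrow>
     (\<exists>lam::real \<Rightarrow> complex.
        (\<forall>x\<ge>0. restr_spectrum (g x) W \<subseteq> {lam x, cnj (lam x)}) \<and>
        (\<exists>x\<ge>0. lam x \<notin> \<real>))"

definition SRPD :: "(real \<Rightarrow> 'a::euclidean_space \<Rightarrow> 'a) \<Rightarrow> nat \<Rightarrow> (nat \<Rightarrow> 'a set) \<Rightarrow> bool" where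
  "SRPD g n Vs \<longleftrightarrow> direct_sum n Vs \<and>
     (\<forall>i\<in>{1..n}. Vs i \<noteq> {0} \<and> (\<forall>x\<ge>0. g x ` Vs i \<subseteq> Vs i) \<and>
        (first_type g (Vs i) \<or> second_type g (Vs i)))"

end

theory Submission
  imports Defs "HOL-Computational_Algebra.Fundamental_Theorem_Algebra"
begin

text \<open>The type condition turns the eigenvalue 0 of g(x0) on V_i into the whole spectrum, so
g(x0) is nilpotent on V_i and g(t) vanishes on V_i for t \<ge> D x0, where D = dim V. For any
x > 0 put s = x / D: an eigenvalue z of g(s) on V_i gives the eigenvalue z^m of g(m s), which
vanishes on V_i for large m, so z = 0. Hence g(s) is nilpotent on V_i as well, and
g(x) = g(s)^D vanishes there. Nilpotency of a real operator whose only eigenvalue is 0 rests on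
the existence of an eigenvalue on every nonzero invariant subspace: an annihilating polynomial
of a vector has a complex root z, hence a real factor of degree 1 or 2 vanishing at z, and that
factor yields an eigenvector for z.\<close>

definition poly_op :: "real poly \<Rightarrow> ('a::real_vector \<Rightarrow> 'a) \<Rightarrow> 'a \<Rightarrow> 'a" where
  "poly_op p T w = (\<Sum>i\<le>degree p. coeff p i *\<^sub>R (T^^i) w)"

lemma poly_op_eq_sum:
  assumes "degree p \<le> n"
  shows "poly_op p T w = (\<Sum>i\<le>n. coeff p i *\<^sub>R (T^^i) w)"
  unfolding poly_op_def
  by (rule sum.mono_neutral_left) (use assms in \<open>auto simp: coeff_eq_0\<close>)

lemma poly_op_0 [simp]: "poly_op 0 T w = 0"
  by (simp add: poly_op_def)

lemma poly_op_add: "poly_op (p + q) T w = poly_op p T w + poly_op q T w"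
  using poly_op_eq_sum[of "p + q" "max (degree p) (degree q)" T w]
    poly_op_eq_sum[of p "max (degree p) (degree q)" T w]
    poly_op_eq_sum[of q "max (degree p) (degree q)" T w]
  by (simp add: degree_add_le scaleR_add_left sum.distrib)

lemma poly_op_smult: "poly_op (smult a p) T w = a *\<^sub>R poly_op p T w"
  using poly_op_eq_sum[of "smult a p" "degree p" T w]
  by (simp add: poly_op_def degree_smult_le scaleR_sum_right)

lemma poly_op_diff: "poly_op (p - q) T w = poly_op p T w - poly_op q T w"
proof -
  have "p - q = p + smult (-1) q" by simp
  then show ?thesis by (simp only: poly_op_add poly_op_smult) simp
qed

lemma poly_op_sum: "poly_op (\<Sum>j\<in>A. p j) T w = (\<Sum>j\<in>A. poly_op (p j) T w)"
  by (induction A rule: infinite_finite_induct) (simp_all add: poly_op_add)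

lemma poly_op_monom: "poly_op (monom a j) T w = a *\<^sub>R (T^^j) w"
  using poly_op_eq_sum[of "monom a j" j T w]
  by (simp add: degree_monom_le coeff_monom if_distrib[of "\<lambda>c. c *\<^sub>R _"] cong: if_cong)

lemma poly_op_pCons:
  assumes "linear T"
  shows "poly_op (pCons a p) T w = a *\<^sub>R w + T (poly_op p T w)"
proof -
  have "poly_op (pCons a p) T w = (\<Sum>i\<le>Suc (degree p). coeff (pCons a p) i *\<^sub>R (T^^i) w)"
    by (rule poly_op_eq_sum) (simp add: degree_pCons_le)
  also have "\<dots> = a *\<^sub>R w + (\<Sum>i\<le>degree p. coeff p i *\<^sub>R (T^^Suc i) w)"
    unfolding sum.atMost_Suc_shift by simp
  also have "\<dots> = a *\<^sub>R w + T (poly_op p T w)"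
    using assms by (simp add: poly_op_def linear_sum linear_scale)
  finally show ?thesis .
qed

lemma poly_op_mult:
  assumes "linear T"
  shows "poly_op (p * q) T w = poly_op p T (poly_op q T w)"
proof (induction p)
  case (pCons a p)
  have "poly_op (pCons a p * q) T w = poly_op (smult a q + pCons 0 (p * q)) T w"
    by simp
  then show ?case
    using assms pCons.IH by (simp add: poly_op_add poly_op_smult poly_op_pCons)
qed simp

lemma linear_funpow:
  fixes T :: "'a::real_vector \<Rightarrow> 'a"
  shows "linear T \<Longrightarrow> linear (T^^k)"
  by (induction k) (simp_all add: id_def linear_iff linear_compose[of "T^^_" T, unfolded o_def])

lemma funpow_image_subset: "T ` U \<subseteq> U \<Longrightarrow> (T^^k) ` U \<subseteq> U"
  by (induction k) auto

lemma poly_op_in_subspace: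
  assumes "subspace U" "T ` U \<subseteq> U" "w \<in> U"
  shows "poly_op p T w \<in> U"
  unfolding poly_op_def
  using funpow_image_subset[OF assms(2)] assms(3)
  by (intro subspace_sum[OF assms(1)] subspace_scale[OF assms(1)]) auto

lemma in_span_image_sum:
  fixes f :: "'i \<Rightarrow> 'a::real_vector"
  assumes "finite I" "x \<in> span (f ` I)"
  shows "\<exists>c. x = (\<Sum>j\<in>I. c j *\<^sub>R f j)"
  using assms
proof (induction I arbitrary: x)
  case (insert i I)
  then obtain k where "x - k *\<^sub>R f i \<in> span (f ` I)"
    by (auto simp: span_insert)
  then obtain c where c: "x - k *\<^sub>R f i = (\<Sum>j\<in>I. c j *\<^sub>R f j)"
    using insert.IH by blast
  have "(\<Sum>j\<in>I. (c(i := k)) j *\<^sub>R f j) = (\<Sum>j\<in>I. c j *\<^sub>R f j)"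
    using insert.hyps by (intro sum.cong) auto
  then have "x = (\<Sum>j\<in>insert i I. (c(i := k)) j *\<^sub>R f j)"
    using c insert.hyps by (simp add: algebra_simps)
  then show ?case by blast
qed simp

lemma poly_op_annihilator_exists:
  fixes T :: "'a::euclidean_space \<Rightarrow> 'a"
  obtains p where "p \<noteq> 0" "poly_op p T u = 0"
proof -
  define f where "f j = (T^^j) u" for j
  have "\<exists>k. f k \<in> span (f ` {..<k})"
  proof (rule ccontr)
    assume none: "\<nexists>k. f k \<in> span (f ` {..<k})"
    have indep: "independent (f ` {..<k}) \<and> inj_on f {..<k}" for k
    proof (induction k)
      case (Suc k)
      have "f k \<notin> span (f ` {..<k})" using none by blast
      moreover from this have "f k \<notin> f ` {..<k}" by (blast intro: span_base)
      ultimately show ?case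
        using Suc.IH by (simp add: lessThan_Suc independent_insertI)
    qed (simp add: independent_empty)
    then have "card (f ` {..<Suc DIM('a)}) = Suc DIM('a)"
      by (simp add: card_image)
    then show False
      using independent_bound indep[of "Suc DIM('a)"] by fastforce
  qed
  then obtain k where "f k \<in> span (f ` {..<k})" by blast
  then obtain c where c: "f k = (\<Sum>j<k. c j *\<^sub>R f j)"
    using in_span_image_sum[of "{..<k}"] by blast
  define p where "p = monom 1 k - (\<Sum>j<k. monom (c j) j)"
  have "coeff p k = 1"
    by (simp add: p_def coeff_diff coeff_sum coeff_monom)
  then have "p \<noteq> 0" by auto
  moreover have "poly_op p T u = 0"
    using c by (simp add: p_def poly_op_diff poly_op_sum poly_op_monom f_def)
  ultimately show thesis
    using that by blast
qed

lemma map_poly_of_real_add: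
  "map_poly complex_of_real (p + q) = map_poly of_real p + map_poly of_real q"
  by (rule poly_eqI) (simp add: coeff_map_poly)

lemma map_poly_of_real_mult:
  "map_poly complex_of_real (p * q) = map_poly of_real p * map_poly of_real q"
  by (rule poly_eqI) (simp add: coeff_map_poly coeff_mult)

lemma poly_map_poly_of_real: "poly (map_poly complex_of_real p) (of_real x) = of_real (poly p x)"
  by (induction p) (auto simp: map_poly_pCons)

lemma real_poly_eq_0_if_nonreal_root:
  fixes r :: "real poly"
  assumes "degree r \<le> 1" "Im z \<noteq> 0" "poly (map_poly complex_of_real r) z = 0"
  shows "r = 0"
proof -
  have r: "r = [:coeff r 0, coeff r 1:]"
    by (rule poly_eqI) (use assms(1) in \<open>auto simp: coeff_pCons coeff_eq_0 split: nat.split\<close>)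
  have "poly (map_poly complex_of_real [:coeff r 0, coeff r 1:]) z = 0"
    using assms(3) by (simp only: r[symmetric])
  then have "coeff r 0 = 0 \<and> coeff r 1 = 0"
    using assms(2) by (auto simp: map_poly_pCons complex_eq_iff)
  then show ?thesis
    using r by simp
qed

text \<open>For non-real z this is (X - z)(X - cnj z).\<close>
definition real_min_poly :: "complex \<Rightarrow> real poly" where
  "real_min_poly z =
     (if Im z = 0 then [:- Re z, 1:] else [:(Re z)\<^sup>2 + (Im z)\<^sup>2, -2 * Re z, 1:])"

lemma degree_real_min_poly_pos: "degree (real_min_poly z) > 0"
  by (simp add: real_min_poly_def)

lemma poly_real_min_poly: "poly (map_poly complex_of_real (real_min_poly z)) z = 0"
  by (simp add: real_min_poly_def map_poly_pCons complex_eq_iff power2_eq_square algebra_simps)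

lemma real_min_poly_dvd:
  fixes p :: "real poly"
  assumes "poly (map_poly complex_of_real p) z = 0"
  shows "real_min_poly z dvd p"
proof (cases "Im z = 0")
  case True
  then have "z = of_real (Re z)"
    by (simp add: complex_eq_iff)
  then have "poly p (Re z) = 0"
    using assms poly_map_poly_of_real[of p "Re z"] by simp
  then show ?thesis
    using True by (simp add: real_min_poly_def poly_eq_0_iff_dvd)
next
  case False
  define q where "q = real_min_poly z"
  have "degree (p mod q) < 2"
    using degree_mod_less'[of q p] False
    by (cases "p mod q = 0") (simp_all add: q_def real_min_poly_def)
  moreover have "poly (map_poly complex_of_real (p mod q)) z = 0"
    using assms poly_real_min_poly[of z] div_mult_mod_eq[of p q]
    by (metis map_poly_of_real_add map_poly_of_real_mult poly_add poly_mult q_def mult_zero_right add_0)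
  ultimately have "p mod q = 0"
    using False by (intro real_poly_eq_0_if_nonreal_root) auto
  then show ?thesis
    unfolding q_def by (simp add: mod_eq_0_iff_dvd)
qed

lemma restr_eigenvalue_of_real_min_poly:
  assumes lin: "linear T" and "subspace U" "T ` U \<subseteq> U" "w \<in> U" "w \<noteq> 0"
    and ann: "poly_op (real_min_poly z) T w = 0"
  shows "restr_eigenvalue T U z"
proof (cases "Im z = 0")
  case True
  then have "T w = Re z *\<^sub>R w"
    using ann by (simp add: real_min_poly_def poly_op_pCons[OF lin] linear_0[OF lin] algebra_simps)
  then show ?thesis
    unfolding restr_eigenvalue_def using assms(2,4,5) True linear_0[OF lin]
    by (intro exI[of _ w] exI[of _ 0]) (simp add: subspace_0)
next
  case False
  let ?a = "Re z" and ?b = "Im z"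
  have "(?a\<^sup>2 + ?b\<^sup>2) *\<^sub>R w + (T (T w) - (2 * ?a) *\<^sub>R T w) = 0"
    using ann False
    by (simp add: real_min_poly_def poly_op_pCons[OF lin] linear_0[OF lin] linear_diff[OF lin]
        linear_scale[OF lin])
  then have "T (T w) = T (T w) - ((?a\<^sup>2 + ?b\<^sup>2) *\<^sub>R w + (T (T w) - (2 * ?a) *\<^sub>R T w))"
    by simp
  also have "\<dots> = (2 * ?a) *\<^sub>R T w - (?a\<^sup>2 + ?b\<^sup>2) *\<^sub>R w"
    by (simp add: algebra_simps)
  finally have TT: "T (T w) = (2 * ?a) *\<^sub>R T w - (?a\<^sup>2 + ?b\<^sup>2) *\<^sub>R w" .
  txt \<open>u + i v is an eigenvector of the complexification for z = a + i b.\<close>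
  define u where "u = T w - ?a *\<^sub>R w"
  define v where "v = ?b *\<^sub>R w"
  have "T u = ?a *\<^sub>R u - ?b *\<^sub>R v"
    unfolding u_def v_def using TT
    by (simp add: linear_diff[OF lin] linear_scale[OF lin] algebra_simps power2_eq_square)
      (metis mult_2_right scaleR_add_left)
  moreover have "T v = ?b *\<^sub>R u + ?a *\<^sub>R v"
    unfolding u_def v_def by (simp add: linear_scale[OF lin] algebra_simps)
  moreover have "u \<in> U" "v \<in> U"
    unfolding u_def v_def using assms(2-4) by (auto intro: subspace_diff subspace_scale)
  moreover have "v \<noteq> 0"
    unfolding v_def using False assms(5) by simp
  ultimately show ?thesis
    unfolding restr_eigenvalue_def by blast
qed

lemma restr_eigenvalue_of_annihilator:
  assumes lin: "linear T" and sub: "subspace U" and inv: "T ` U \<subseteq> U"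
    and "p \<noteq> 0" "w \<in> U" "w \<noteq> 0" "poly_op p T w = 0"
  shows "\<exists>z. restr_eigenvalue T U z"
  using assms(4-)
proof (induction "degree p" arbitrary: p w rule: less_induct)
  case less
  show ?case
  proof (cases "degree p = 0")
    case True
    then have "poly_op p T w = coeff p 0 *\<^sub>R w"
      by (simp add: poly_op_def)
    with less.prems True show ?thesis
      by (metis leading_coeff_0_iff scale_eq_0_iff)
  next
    case False
    then obtain z where "poly (map_poly complex_of_real p) z = 0"
      by (metis fundamental_theorem_of_algebra_alt degree_map_poly degree_pCons_0 of_real_eq_0_iff)
    then obtain s where p: "p = real_min_poly z * s"
      using real_min_poly_dvd by (blast elim: dvdE)
    with less.prems(1) have "s \<noteq> 0" "degree s < degree p"
      using degree_real_min_poly_pos[of z] by (auto simp: degree_mult_eq)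
    define w' where "w' = poly_op s T w"
    show ?thesis
    proof (cases "w' = 0")
      case True
      then show ?thesis
        using less.hyps[OF \<open>degree s < degree p\<close> \<open>s \<noteq> 0\<close> less.prems(2,3)] by (simp add: w'_def)
    next
      case False
      have "w' \<in> U"
        unfolding w'_def by (rule poly_op_in_subspace[OF sub inv less.prems(2)])
      moreover have "poly_op (real_min_poly z) T w' = 0"
        using less.prems(4) p poly_op_mult[OF lin] w'_def by simp
      ultimately show ?thesis
        using restr_eigenvalue_of_real_min_poly[OF lin sub inv] False by blast
    qed
  qed
qed

lemma restr_eigenvalue_exists:
  fixes T :: "'a::euclidean_space \<Rightarrow> 'a"
  assumes "linear T" "subspace U" "T ` U \<subseteq> U" "U \<noteq> {0}"
  obtains z where "restr_eigenvalue T U z"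
proof -
  obtain w where "w \<in> U" "w \<noteq> 0"
    using assms(2,4) subspace_0 by blast
  moreover obtain p where "p \<noteq> 0" "poly_op p T w = 0"
    using poly_op_annihilator_exists by blast
  ultimately show thesis
    using restr_eigenvalue_of_annihilator[OF assms(1-3)] that by blast
qed

lemma restr_eigenvalue_0_iff: "restr_eigenvalue T W 0 \<longleftrightarrow> (\<exists>w\<in>W. w \<noteq> 0 \<and> T w = 0)"
  unfolding restr_eigenvalue_def by auto

lemma restr_spectrum_mono: "W \<subseteq> U \<Longrightarrow> restr_spectrum T W \<subseteq> restr_spectrum T U"
  unfolding restr_spectrum_def restr_eigenvalue_def by blast

lemma funpow_eq_0_mono:
  fixes T :: "'a::real_vector \<Rightarrow> 'a"
  assumes "linear T" "(T^^k) u = 0" "k \<le> m"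
  shows "(T^^m) u = 0"
proof -
  have "(T^^m) u = (T^^(m - k) \<circ> T^^k) u"
    using assms(3) by (simp flip: funpow_add)
  then show ?thesis
    using assms(2) linear_0[OF linear_funpow[OF assms(1)]] by simp
qed



lemma dim_image_less_if_kernel:
  fixes T :: "'a::euclidean_space \<Rightarrow> 'a"
  assumes lin: "linear T" and sub: "subspace S" and w: "w \<in> S" "w \<noteq> 0" "T w = 0"
  shows "dim (T ` S) < dim S"
proof -
  have "independent {w}"
    using w by simp
  then obtain B where B: "{w} \<subseteq> B" "B \<subseteq> S" "independent B" "S \<subseteq> span B"
    using maximal_independent_subset_extend[of "{w}" S] w by auto
  have fin: "finite B"
    using independent_bound B(3) by blast
  have "span B = S"
    using B sub by (simp add: span_subspace)
  then have dimS: "dim S = card B"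
    using dim_span_eq_card_independent[OF B(3)] by simp
  have "T ` B = insert 0 (T ` (B - {w}))"
    using B(1) w by auto
  then have "T ` S \<subseteq> span (T ` (B - {w}))"
    using linear_span_image[OF lin, of B] \<open>span B = S\<close> by simp
  then have "dim (T ` S) \<le> card (T ` (B - {w}))"
    using dim_le_card fin by blast
  also have "\<dots> \<le> card (B - {w})"
    using fin by (simp add: card_image_le)
  also have "\<dots> < card B"
    using fin B(1) by (intro card_Diff1_less) auto
  finally show ?thesis
    using dimS by simp
qed

lemma nilpotent_if_restr_spectrum_subset_0:
  fixes T :: "'a::euclidean_space \<Rightarrow> 'a"
  assumes lin: "linear T" and "subspace U" "T ` U \<subseteq> U" "restr_spectrum T U \<subseteq> {0}" "u \<in> U"
  shows "(T^^dim U) u = 0"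
  using assms(2-)
proof (induction "dim U" arbitrary: U u rule: less_induct)
  case less
  show ?case
  proof (cases "U = {0}")
    case True
    then show ?thesis
      using less.prems(4) linear_0[OF linear_funpow[OF lin]] by simp
  next
    case False
    obtain z where "restr_eigenvalue T U z"
      using restr_eigenvalue_exists[OF lin less.prems(1,2) False] .
    with less.prems(3) have "restr_eigenvalue T U 0"
      by (auto simp: restr_spectrum_def)
    then obtain w where "w \<in> U" "w \<noteq> 0" "T w = 0"
      by (auto simp: restr_eigenvalue_0_iff)
    then have dim_less: "dim (T ` U) < dim U"
      using dim_image_less_if_kernel[OF lin less.prems(1)] by blast
    have "(T^^dim (T ` U)) (T u) = 0"
    proof (rule less.hyps[OF dim_less])
      show "subspace (T ` U)"
        using linear_subspace_image[OF lin less.prems(1)] .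
      show "T ` T ` U \<subseteq> T ` U"
        using less.prems(2) by blast
      show "restr_spectrum T (T ` U) \<subseteq> {0}"
        using restr_spectrum_mono[OF less.prems(2)] less.prems(3) by blast
      show "T u \<in> T ` U"
        using less.prems(4) by blast
    qed
    then have "(T^^Suc (dim (T ` U))) u = 0"
      by (simp only: funpow_Suc_right o_apply)
    then show ?thesis
      by (rule funpow_eq_0_mono[OF lin]) (use dim_less in simp)
  qed
qed

lemma restr_eigenvalue_funpow:
  assumes lin: "linear T" and "restr_eigenvalue T W z"
  shows "restr_eigenvalue (T^^m) W (z^m)"
proof -
  obtain u v where uv: "u \<in> W" "v \<in> W" "u \<noteq> 0 \<or> v \<noteq> 0"
    and Tu: "T u = Re z *\<^sub>R u - Im z *\<^sub>R v" and Tv: "T v = Im z *\<^sub>R u + Re z *\<^sub>R v"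
    using assms(2) unfolding restr_eigenvalue_def by blast
  have "(T^^m) u = Re (z^m) *\<^sub>R u - Im (z^m) *\<^sub>R v \<and> (T^^m) v = Im (z^m) *\<^sub>R u + Re (z^m) *\<^sub>R v"
  proof (induction m)
    case (Suc m)
    then have "(T^^Suc m) u = T (Re (z^m) *\<^sub>R u - Im (z^m) *\<^sub>R v)"
      "(T^^Suc m) v = T (Im (z^m) *\<^sub>R u + Re (z^m) *\<^sub>R v)"
      by (simp_all only: funpow.simps(2) o_apply)
    then show ?case
      by (simp add: linear_diff[OF lin] linear_add[OF lin] linear_scale[OF lin] Tu Tv algebra_simps)
  qed simp
  then show ?thesis
    unfolding restr_eigenvalue_def using uv by blast
qed

lemma restr_eigenvalue_eq_0_if_annihilated:
  assumes "\<forall>u\<in>W. T u = 0" "restr_eigenvalue T W z"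
  shows "z = 0"
proof -
  obtain u v where uv: "u \<in> W" "v \<in> W" "u \<noteq> 0 \<or> v \<noteq> 0"
    and "T u = Re z *\<^sub>R u - Im z *\<^sub>R v" "T v = Im z *\<^sub>R u + Re z *\<^sub>R v"
    using assms(2) unfolding restr_eigenvalue_def by blast
  with assms(1) have eq: "Re z *\<^sub>R u - Im z *\<^sub>R v = 0" "Im z *\<^sub>R u + Re z *\<^sub>R v = 0"
    by simp_all
  have "(Re z * Re z + Im z * Im z) *\<^sub>R u
      = Re z *\<^sub>R (Re z *\<^sub>R u - Im z *\<^sub>R v) + Im z *\<^sub>R (Im z *\<^sub>R u + Re z *\<^sub>R v)"
    "(Re z * Re z + Im z * Im z) *\<^sub>R v
      = Re z *\<^sub>R (Im z *\<^sub>R u + Re z *\<^sub>R v) - Im z *\<^sub>R (Re z *\<^sub>R u - Im z *\<^sub>R v)"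
    by (simp_all add: algebra_simps)
  then have "Re z * Re z + Im z * Im z = 0"
    using eq uv by auto
  then show ?thesis
    by (simp add: complex_eq_iff sum_squares_eq_zero_iff)
qed

lemma restr_spectrum_eq_0_if_annihilated:
  assumes "subspace W" "W \<noteq> {0}" "\<forall>u\<in>W. T u = 0"
  shows "restr_spectrum T W = {0}"
proof -
  have "\<exists>w\<in>W. w \<noteq> 0"
    using assms(1,2) subspace_0 by blast
  then have "restr_eigenvalue T W 0"
    using assms(3) by (auto simp: restr_eigenvalue_0_iff)
  then show ?thesis
    using restr_eigenvalue_eq_0_if_annihilated[OF assms(3)] by (auto simp: restr_spectrum_def)
qed

corollary funpow_DIM_eq_0_if_restr_spectrum_subset_0:
  fixes T :: "'a::euclidean_space \<Rightarrow> 'a"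
  assumes "linear T" "subspace U" "T ` U \<subseteq> U" "restr_spectrum T U \<subseteq> {0}" "u \<in> U"
  shows "(T^^DIM('a)) u = 0"
  using nilpotent_if_restr_spectrum_subset_0[OF assms]
  by (rule funpow_eq_0_mono[OF assms(1)]) (rule dim_subset_UNIV)

lemma semigroup_linear: "semigroup g \<Longrightarrow> x \<ge> 0 \<Longrightarrow> linear (g x)"
  by (simp add: semigroup_def)

lemma semigroup_funpow:
  assumes "semigroup g" "x \<ge> 0"
  shows "g x ^^ m = g (real m * x)"
proof (induction m)
  case 0
  then show ?case
    using assms(1) by (simp add: semigroup_def)
next
  case (Suc m)
  have "g (real (Suc m) * x) = g (x + real m * x)"
    by (simp add: algebra_simps)
  also have "\<dots> = g x \<circ> g (real m * x)"
    using assms by (simp add: semigroup_def)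
  finally show ?case
    using Suc by simp
qed

lemma semigroup_annihilates_later:
  assumes "semigroup g" "0 \<le> t" "t \<le> t'" "g t u = 0"
  shows "g t' u = 0"
proof -
  have "g t' = g (t' - t) \<circ> g t"
    using assms(1-3) unfolding semigroup_def by (metis diff_add_cancel diff_ge_0_iff_ge)
  then show ?thesis
    using assms(3,4) linear_0[OF semigroup_linear[OF assms(1)]] by simp
qed

lemma semigroup_annihilates_for_all_positive:
  fixes g :: "real \<Rightarrow> 'a::euclidean_space \<Rightarrow> 'a"
  assumes sg: "semigroup g" and sub: "subspace W" and inv: "\<forall>x\<ge>0. g x ` W \<subseteq> W"
    and "t \<ge> 0" and ann: "\<forall>u\<in>W. g t u = 0" and "x > 0" and "u \<in> W"
  shows "g x u = 0"
proof -
  define s where "s = x / DIM('a)"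
  have s: "s > 0"
    using \<open>x > 0\<close> by (simp add: s_def)
  have "restr_spectrum (g s) W \<subseteq> {0}"
  proof
    txt \<open>g(s)^m = g(m s) vanishes on W once m s \<ge> t, and z^m is one of its eigenvalues.\<close>
    fix z assume "z \<in> restr_spectrum (g s) W"
    obtain m :: nat where "t / s \<le> real m"
      using real_arch_simple by blast
    then have "t \<le> real m * s"
      using s by (simp add: field_simps)
    then have "\<forall>u\<in>W. g (real m * s) u = 0"
      using semigroup_annihilates_later[OF sg \<open>t \<ge> 0\<close>] ann by blast
    moreover have "restr_eigenvalue (g (real m * s)) W (z^m)"
      using restr_eigenvalue_funpow[OF semigroup_linear[OF sg], of s W z m]
        \<open>z \<in> restr_spectrum (g s) W\<close> s semigroup_funpow[OF sg, of s m]
      by (simp add: restr_spectrum_def)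
    ultimately have "z^m = 0"
      by (rule restr_eigenvalue_eq_0_if_annihilated)
    then show "z \<in> {0}"
      by simp
  qed
  then have "(g s ^^ DIM('a)) u = 0"
    using funpow_DIM_eq_0_if_restr_spectrum_subset_0[OF semigroup_linear[OF sg] sub] inv s
      \<open>u \<in> W\<close> by simp
  then show ?thesis
    using semigroup_funpow[OF sg, of s "DIM('a)"] s by (simp add: s_def)
qed

lemma restr_spectrum_subset_0_if_eigenvalue_0:
  assumes "first_type g W \<or> second_type g W" "x \<ge> 0" "restr_eigenvalue (g x) W 0"
  shows "restr_spectrum (g x) W \<subseteq> {0}"
proof -
  have zero: "0 \<in> restr_spectrum (g x) W"
    using assms(3) by (simp add: restr_spectrum_def)
  from assms(1) show ?thesis
  proof
    assume "first_type g W"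
    then obtain r where "restr_spectrum (g x) W = {complex_of_real r}"
      using assms(2) unfolding first_type_def by blast
    with zero show ?thesis
      by simp
  next
    assume "second_type g W"
    then obtain lam where lam: "restr_spectrum (g x) W \<subseteq> {lam x, cnj (lam x)}"
      using assms(2) unfolding second_type_def by blast
    with zero have "lam x = 0"
      by auto
    with lam show ?thesis
      by simp
  qed
qed

theorem mainTheorem4:
  fixes g :: "real \<Rightarrow> 'a::euclidean_space \<Rightarrow> 'a"
    and n :: nat and Vs :: "nat \<Rightarrow> 'a set" and i :: nat and x0 :: real
  assumes "semigroup g"
    and "SRPD g n Vs"
    and "i \<in> {1..n}"
    and "x0 > 0"
    and "restr_eigenvalue (g x0) (Vs i) 0"
  shows "\<forall>x>0. restr_spectrum (g x) (Vs i) = {0} \<and> Vs i \<subseteq> {v. g x v = 0}"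
proof -
  have sub: "subspace (Vs i)" and ne: "Vs i \<noteq> {0}" and inv: "\<forall>x\<ge>0. g x ` Vs i \<subseteq> Vs i"
    and type: "first_type g (Vs i) \<or> second_type g (Vs i)"
    using assms(2,3) unfolding SRPD_def direct_sum_def by blast+
  have "restr_spectrum (g x0) (Vs i) \<subseteq> {0}"
    using restr_spectrum_subset_0_if_eigenvalue_0[OF type] assms(4,5) by simp
  then have "\<forall>u\<in>Vs i. (g x0 ^^ DIM('a)) u = 0"
    using funpow_DIM_eq_0_if_restr_spectrum_subset_0[OF semigroup_linear[OF assms(1)] sub] inv assms(4)
    by simp
  then have ann: "\<forall>u\<in>Vs i. g (real DIM('a) * x0) u = 0"
    using semigroup_funpow[OF assms(1), of x0] assms(4) by simp
  have "\<forall>u\<in>Vs i. g x u = 0" if "x > 0" for x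
    using semigroup_annihilates_for_all_positive[OF assms(1) sub inv _ ann that] assms(4) by simp
  then show ?thesis
    using restr_spectrum_eq_0_if_annihilated[OF sub ne] by auto
qed

end
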